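(* Let $\Gamma\in\mathcal{H}$, $q\in\mathbb{N}^*$ and $k\in\mathbb{N}^*$. There exists $l\in\mathbb{N}^*$ such that for every $f\in P_l^{C_q^{-1}(\Gamma)}$, the torus map $C_q f C_q^{-1}$ belongs to $P_k^\Gamma$.
   Context: $\mathbb{T}^2=\mathbb{R}^2/\mathbb{Z}^2$, $R_\theta(x)=x+\theta$; $\overline{\mathcal{O}}^{\infty}(\mathbb{T}^2)$ is the $C^\infty$-closure of $\{h\circ R_\theta\circ h^{-1}: h\in\mathrm{Diff}^\infty(\mathbb{T}^2),\theta\in\mathbb{T}^2\}$ (its elements are homotopic to the identity). $C_q$ is the linear map with matrix $\begin{pmatrix}1/q&0\\0&1\end{pmatrix}$; for a torus diffeomorphism $f$ homotopic to the identity with lift $\tilde f$, $C_q f C_q^{-1}$ denotes the torus diffeomorphism obtained as the quotient of $C_q\circ\tilde f\circ C_q^{-1}$ (which commutes with $\mathbb{Z}^2$-translations). $\mathcal{H}$ is the set of non-empty compact subsets of $\mathbb{R}^2$ modulo translations and positive-ratio homotheties; $C_q^{-1}(\Gamma)$ is the type of $C_q^{-1}(\hat\Gamma)$, $\hat\Gamma\in\Gamma$. For $r>0$, $K\in\mathcal{LA}_r(\Gamma)$ means $K$ non-empty compact, $\mathrm{diam}(K)>r$ and some $\hat\Gamma\in\Gamma$ of diameter $1$ satisfies $d_H(K/\mathrm{diam}(K),\hat\Gamma)<1/r$. With $D=[0,1]^2$, $P_k^\Gamma=\{f\in\overline{\mathcal{O}}^{\infty}(\mathbb{T}^2): \exists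 n\in\mathbb{N}^*,\ \tilde f^n(D)\in\mathcal{LA}_k(\Gamma)\}$ with $\tilde f$ any lift. *)

theory Defs
  imports "HOL-Analysis.Analysis"
begin

text \<open>The plane R^2 is modelled as real \<times> real; a map of the torus T^2 = R^2/Z^2
  homotopic to the identity is represented by a lift F : R^2 \<Rightarrow> R^2 commuting
  with integer translations.\<close>

type_synonym pt = "real \<times> real"

definition Z2 :: "pt set" where
  "Z2 = {(a, b) | a b. a \<in> \<int> \<and> b \<in> \<int>}"

fun pd :: "pt list \<Rightarrow> (pt \<Rightarrow> pt) \<Rightarrow> pt \<Rightarrow> pt" where
  "pd [] g = g"
| "pd (e # es) g = (\<lambda>x. vector_derivative (\<lambda>t. pd es g (x + t *\<^sub>R e)) (at 0))"

definition smooth :: "(pt \<Rightarrow> pt) \<Rightarrow> bool" where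
  "smooth g \<longleftrightarrow> (\<forall>es. set es \<subseteq> Basis \<longrightarrow>
      continuous_on UNIV (pd es g) \<and>
      (\<forall>e\<in>Basis. \<forall>x. (\<lambda>t. pd es g (x + t *\<^sub>R e)) differentiable (at 0)))"

text \<open>Lifts of C^\<infinity> diffeomorphisms of T^2 (arbitrary homotopy class).\<close>
definition torus_diffeo_lift :: "(pt \<Rightarrow> pt) \<Rightarrow> bool" where
  "torus_diffeo_lift H \<longleftrightarrow> bij H \<and> smooth H \<and> smooth (inv H) \<and>
     (\<forall>x m. m \<in> Z2 \<longrightarrow> H (x + m) - H x \<in> Z2) \<and>
     (\<forall>x m. m \<in> Z2 \<longrightarrow> inv H (x + m) - inv H x \<in> Z2)"

text \<open>Lifts homotopic to the identity: commute with Z^2 translations.\<close>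
definition commutes_Z2 :: "(pt \<Rightarrow> pt) \<Rightarrow> bool" where
  "commutes_Z2 F \<longleftrightarrow> (\<forall>x m. m \<in> Z2 \<longrightarrow> F (x + m) = F x + m)"

text \<open>Lifts of the maps h \<circ> R_\<theta> \<circ> h^{-1} (all lifts: up to integer translation).\<close>
definition conj_rot_lifts :: "(pt \<Rightarrow> pt) set" where
  "conj_rot_lifts = {(\<lambda>x. H (inv H x + \<theta>) + m) | H \<theta> m.
      torus_diffeo_lift H \<and> m \<in> Z2}"

definition Cinf_conv :: "(nat \<Rightarrow> pt \<Rightarrow> pt) \<Rightarrow> (pt \<Rightarrow> pt) \<Rightarrow> bool" where
  "Cinf_conv Fs F \<longleftrightarrow> (\<forall>es. set es \<subseteq> Basis \<longrightarrow>
      uniform_limit UNIV (\<lambda>n. pd es (Fs n)) (pd es F) sequentially)"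

text \<open>Lifts of elements of the C^\<infinity>-closure (in Diff^\<infinity>(T^2)) of the conjugates of rotations.\<close>
definition Obar_lifts :: "(pt \<Rightarrow> pt) set" where
  "Obar_lifts = {F. torus_diffeo_lift F \<and> commutes_Z2 F \<and>
      (\<exists>Fs. (\<forall>n. Fs n \<in> conj_rot_lifts) \<and> Cinf_conv Fs F)}"

text \<open>The space H: non-empty compact sets modulo translations and positive homotheties.\<close>
definition homothety_class :: "pt set \<Rightarrow> pt set set" where
  "homothety_class K = {(\<lambda>x. c *\<^sub>R x + v) ` K | c v. c > 0}"

definition Hspace :: "pt set set set" where
  "Hspace = {homothety_class K | K. compact K \<and> K \<noteq> {}}"

definition Cq :: "nat \<Rightarrow> pt \<Rightarrow> pt" where
  "Cq q = (\<lambda>(x, y). (x / real q, y))"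

definition Cq_inv :: "nat \<Rightarrow> pt \<Rightarrow> pt" where
  "Cq_inv q = (\<lambda>(x, y). (real q * x, y))"

definition Cq_inv_class :: "nat \<Rightarrow> pt set set \<Rightarrow> pt set set" where
  "Cq_inv_class q \<Gamma> = (\<lambda>K. Cq_inv q ` K) ` \<Gamma>"

definition Cq_conj :: "nat \<Rightarrow> (pt \<Rightarrow> pt) \<Rightarrow> pt \<Rightarrow> pt" where
  "Cq_conj q F = Cq q \<circ> F \<circ> Cq_inv q"

definition hausdorff_dist :: "pt set \<Rightarrow> pt set \<Rightarrow> real" where
  "hausdorff_dist A B = max (SUP a\<in>A. infdist a B) (SUP b\<in>B. infdist b A)"

definition LA :: "real \<Rightarrow> pt set set \<Rightarrow> pt set set" where
  "LA r \<Gamma> = {K. compact K \<and> K \<noteq> {} \<and> diameter K > r \<and>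
      (\<exists>G\<in>\<Gamma>. diameter G = 1 \<and>
         hausdorff_dist ((\<lambda>x. (1 / diameter K) *\<^sub>R x) ` K) G < 1 / r)}"

definition unit_square :: "pt set" where
  "unit_square = {0..1} \<times> {0..1}"

text \<open>P_k^\<Gamma>, expressed on lifts (the condition does not depend on the lift chosen).\<close>
definition P :: "nat \<Rightarrow> pt set set \<Rightarrow> (pt \<Rightarrow> pt) set" where
  "P k \<Gamma> = {F \<in> Obar_lifts. \<exists>n::nat. n \<ge> 1 \<and> (F ^^ n) ` unit_square \<in> LA (real k) \<Gamma>}"

end

(* If h is a diffeomorphism of T^2, precomposing it with the inverse of its action on
   H_1(T^2) = Z^2 gives a diffeomorphism g homotopic to the identity with
   g R_theta' g^-1 = h R_theta h^-1.  Then g' = C_q g C_q^-1 is again a torus diffeomorphism, and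
   C_q (g R_theta' g^-1) C_q^-1 = g' R_(C_q theta') g'^-1.  Every derivative
   of C_q f C_q^-1 is a constant multiple of C_q applied to the corresponding derivative of f,
   so C^infinity limits are preserved and C_q f C_q^-1 stays in the closure.

   The n-th iterate of C_q f C_q^-1 maps D onto C_q(f^n(C_q^-1 D)), and C_q^-1 D = [0, q] x [0, 1]
   is covered by integer translates of D, so f^n(C_q^-1 D) is within Hausdorff distance q of
   f^n(D).  If f^n(D) has diameter d > l and is within d/l of d times a set of shape
   C_q^-1(Gamma) and diameter 1, then, C_q being 1-Lipschitz, the iterate is within q + d/l of a
   set of shape Gamma and diameter at least d/q.  For l = 20 q^2 (k + 1) the error relative to
   the diameter is below 1/k. *)

theory Submission
  imports Defs
begin

section \<open>Smooth maps of the plane\<close>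

lemma Basis_pt: "(Basis :: pt set) = {(1, 0), (0, 1)}"
  by (auto simp: Basis_prod_def)

lemma pd_append: "pd es (pd es' g) = pd (es @ es') g"
  by (induction es) auto

lemma smooth_coinduct:
  assumes "g \<in> S"
    and "\<And>h. h \<in> S \<Longrightarrow> continuous_on UNIV h"
    and "\<And>h e x. h \<in> S \<Longrightarrow> e \<in> Basis \<Longrightarrow> (\<lambda>t. h (x + t *\<^sub>R e)) differentiable (at 0)"
    and "\<And>h e. h \<in> S \<Longrightarrow> e \<in> Basis \<Longrightarrow> pd [e] h \<in> S"
  shows "smooth g"
proof -
  have "pd es g \<in> S" if "set es \<subseteq> Basis" for es
    using that by (induction es) (use assms in auto)
  then show ?thesis
    using assms unfolding smooth_def by blast
qed

lemma smooth_pd: "smooth g \<Longrightarrow> set es \<subseteq> Basis \<Longrightarrow> smooth (pd es g)"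
  unfolding smooth_def pd_append by auto

lemma smooth_imp_continuous: "smooth g \<Longrightarrow> continuous_on UNIV g"
  unfolding smooth_def by (metis empty_subsetI pd.simps(1) set_empty)

lemma smooth_has_vector_derivative:
  assumes "smooth g" "e \<in> Basis"
  shows "((\<lambda>t. g (x + t *\<^sub>R e)) has_vector_derivative pd [e] g x) (at 0)"
proof -
  have "(\<lambda>t. g (x + t *\<^sub>R e)) differentiable (at 0)"
    using assms unfolding smooth_def by (metis empty_subsetI pd.simps(1) set_empty)
  then show ?thesis
    by (simp add: vector_derivative_works)
qed

lemma smooth_has_derivative:
  assumes "smooth g"
  shows "(g has_derivative (\<lambda>v. fst v *\<^sub>R pd [(1, 0)] g x + snd v *\<^sub>R pd [(0, 1)] g x)) (at x)"
proof -
  have line: "((\<lambda>s. g (p + (s - s0) *\<^sub>R e)) has_derivative (\<lambda>t. t *\<^sub>R pd [e] g p)) (at s0)"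
    if "e \<in> Basis" for p e and s0 :: real
  proof -
    have "((\<lambda>s. s - s0) has_vector_derivative 1) (at s0)"
      by (auto intro!: derivative_eq_intros)
    from vector_diff_chain_at[OF this, of "\<lambda>t. g (p + t *\<^sub>R e)"]
      smooth_has_vector_derivative[OF assms that, of p]
    show ?thesis
      by (simp add: o_def has_vector_derivative_def)
  qed
  obtain x0 y0 where x: "x = (x0, y0)"
    by (cases x)
  have dx: "((\<lambda>a. g (a, y0)) has_derivative (\<lambda>t. t *\<^sub>R pd [(1, 0)] g (x0, y0))) (at x0)"
    using line[of "(1, 0)" "(x0, y0)" x0] by (simp add: Basis_pt del: pd.simps)
  have dy: "((\<lambda>b. g (a, b)) has_derivative blinfun_scaleR_left (pd [(0, 1)] g (a, b))) (at b)"
    for a b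
    using line[of "(0, 1)" "(a, b)" b] by (simp add: Basis_pt del: pd.simps)
  have "continuous_on UNIV (pd [(0, 1)] g)"
    using smooth_imp_continuous[OF smooth_pd[OF assms, of "[(0, 1)]"]] by (simp add: Basis_pt)
  then have "continuous (at (x0, y0)) (\<lambda>p. blinfun_scaleR_left (pd [(0, 1)] g p))"
    by (intro bounded_linear.continuous[OF bounded_linear_blinfun_scaleR_left])
      (simp add: continuous_on_eq_continuous_at del: pd.simps)
  then have "continuous (at (x0, y0) within UNIV \<times> UNIV)
      (\<lambda>(a, b). blinfun_scaleR_left (pd [(0, 1)] g (a, b)))"
    by (simp add: case_prod_beta' del: pd.simps)
  from has_derivative_partialsI[OF dx dy this]
  show ?thesis
    by (simp add: x case_prod_beta' split_beta)
qed

text \<open>The closure of \<open>f \<circ> g\<close> under the chain rule: it is closed under partial derivatives,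
  which yields smoothness of \<open>f \<circ> g\<close> by \<open>smooth_coinduct\<close>.\<close>

inductive_set chain_terms :: "(pt \<Rightarrow> pt) \<Rightarrow> (pt \<Rightarrow> pt) set" for g where
  comp: "smooth f \<Longrightarrow> (\<lambda>x. f (g x)) \<in> chain_terms g"
| add: "u \<in> chain_terms g \<Longrightarrow> v \<in> chain_terms g \<Longrightarrow> (\<lambda>x. u x + v x) \<in> chain_terms g"
| scale: "smooth h \<Longrightarrow> bounded_linear (\<phi> :: pt \<Rightarrow> real) \<Longrightarrow> u \<in> chain_terms g \<Longrightarrow>
    (\<lambda>x. \<phi> (h x) *\<^sub>R u x) \<in> chain_terms g"

lemma chain_terms_continuous:
  assumes "smooth g" "u \<in> chain_terms g"
  shows "continuous_on UNIV u"
  using assms(2)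
proof induction
  case (comp f)
  show ?case
    using continuous_on_compose[OF smooth_imp_continuous[OF assms(1)]
        continuous_on_subset[OF smooth_imp_continuous[OF comp]]]
    by (simp add: o_def)
next
  case (scale h \<phi> u)
  show ?case
    using scale smooth_imp_continuous[OF scale(1)]
    by (intro continuous_intros continuous_on_compose2[OF linear_continuous_on[OF scale(2)]]) auto
qed (auto intro: continuous_intros)

lemma chain_terms_has_vector_derivative:
  assumes "smooth g" "u \<in> chain_terms g" "e \<in> Basis"
  shows "\<exists>u' \<in> chain_terms g. \<forall>x. ((\<lambda>t. u (x + t *\<^sub>R e)) has_vector_derivative u' x) (at 0)"
  using assms(2)
proof induction
  case (comp f)
  let ?u' = "\<lambda>x. fst (pd [e] g x) *\<^sub>R pd [(1, 0)] f (g x) + snd (pd [e] g x) *\<^sub>R pd [(0, 1)] f (g x)"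
  have "((\<lambda>t. f (g (x + t *\<^sub>R e))) has_vector_derivative ?u' x) (at 0)" for x
    using has_derivative_compose[OF
        smooth_has_vector_derivative[OF assms(1,3), of x, unfolded has_vector_derivative_def]
        smooth_has_derivative[OF comp, of "g (x + 0 *\<^sub>R e)"]]
    by (simp add: has_vector_derivative_def scaleR_add_right del: pd.simps)
  moreover have "?u' \<in> chain_terms g"
    using smooth_pd[OF comp] smooth_pd[OF assms(1), of "[e]"] assms(3)
    by (intro chain_terms.add chain_terms.scale chain_terms.comp
        bounded_linear_fst bounded_linear_snd)
      (auto simp: Basis_pt simp del: pd.simps)
  ultimately show ?case
    by (intro bexI[of _ ?u']) auto
next
  case (add u v)
  then obtain u' v' where "u' \<in> chain_terms g" "v' \<in> chain_terms g"
    "\<And>x. ((\<lambda>t. u (x + t *\<^sub>R e)) has_vector_derivative u' x) (at 0)"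
    "\<And>x. ((\<lambda>t. v (x + t *\<^sub>R e)) has_vector_derivative v' x) (at 0)"
    by blast
  then show ?case
    by (intro bexI[of _ "\<lambda>x. u' x + v' x"]) (auto intro: has_vector_derivative_add chain_terms.add)
next
  case (scale h \<phi> u)
  then obtain u' where u': "u' \<in> chain_terms g"
    "\<And>x. ((\<lambda>t. u (x + t *\<^sub>R e)) has_vector_derivative u' x) (at 0)"
    by blast
  have "((\<lambda>t. \<phi> (h (x + t *\<^sub>R e))) has_real_derivative \<phi> (pd [e] h x)) (at 0)" for x
    using bounded_linear.has_vector_derivative[OF scale(2)
        smooth_has_vector_derivative[OF scale(1) assms(3)]]
    by (simp add: has_real_derivative_iff_has_vector_derivative del: pd.simps)
  from has_vector_derivative_scaleR[OF this u'(2)]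
  have "((\<lambda>t. \<phi> (h (x + t *\<^sub>R e)) *\<^sub>R u (x + t *\<^sub>R e)) has_vector_derivative
      \<phi> (h x) *\<^sub>R u' x + \<phi> (pd [e] h x) *\<^sub>R u x) (at 0)" for x
    by simp
  moreover have "(\<lambda>x. \<phi> (h x) *\<^sub>R u' x + \<phi> (pd [e] h x) *\<^sub>R u x) \<in> chain_terms g"
    using scale smooth_pd[OF scale(1), of "[e]"] assms(3)
    by (intro chain_terms.add chain_terms.scale u') (auto simp del: pd.simps)
  ultimately show ?case
    by (intro bexI[of _ "\<lambda>x. \<phi> (h x) *\<^sub>R u' x + \<phi> (pd [e] h x) *\<^sub>R u x"]) auto
qed

lemma smooth_comp:
  assumes "smooth f" "smooth g"
  shows "smooth (\<lambda>x. f (g x))"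
proof (rule smooth_coinduct[where S = "chain_terms g"])
  show "(\<lambda>x. f (g x)) \<in> chain_terms g"
    by (rule chain_terms.comp[OF assms(1)])
  show "continuous_on UNIV u" if "u \<in> chain_terms g" for u
    by (rule chain_terms_continuous[OF assms(2) that])
  fix u and e :: pt
  assume u: "u \<in> chain_terms g" and e: "e \<in> Basis"
  then obtain u' where "u' \<in> chain_terms g"
    and u': "\<And>x. ((\<lambda>t. u (x + t *\<^sub>R e)) has_vector_derivative u' x) (at 0)"
    using chain_terms_has_vector_derivative[OF assms(2)] by blast
  moreover have "pd [e] u = u'"
    using u' by (auto simp: vector_derivative_at)
  ultimately show "pd [e] u \<in> chain_terms g"
    by simp
  show "(\<lambda>t. u (x + t *\<^sub>R e)) differentiable (at 0)" for x
    using u' unfolding differentiable_def has_vector_derivative_def by blast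
qed

lemma smooth_affine:
  assumes "linear L"
  shows "smooth (\<lambda>x. L x + c)"
proof (rule smooth_coinduct[where S = "{\<lambda>x. L x + c | L c. linear L}"])
  show "(\<lambda>x. L x + c) \<in> {\<lambda>x. L x + c | L c. linear L}"
    using assms by blast
  fix h :: "pt \<Rightarrow> pt" and e :: pt
  assume "h \<in> {\<lambda>x. L x + c | L c. linear L}"
  then obtain L c where h: "h = (\<lambda>x. L x + c)" "linear L"
    by blast
  show "continuous_on UNIV h"
    unfolding h(1)
    by (intro continuous_intros linear_continuous_on linear_conv_bounded_linear[THEN iffD1] h(2))
  have line: "((\<lambda>t. h (x + t *\<^sub>R e)) has_vector_derivative L e) (at 0)" for x
  proof -
    have "(\<lambda>t. h (x + t *\<^sub>R e)) = (\<lambda>t. (L x + c) + t *\<^sub>R L e)"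
      using h by (auto simp: linear_add linear_scale)
    then show ?thesis
      by (auto intro!: derivative_eq_intros)
  qed
  then show "(\<lambda>t. h (x + t *\<^sub>R e)) differentiable (at 0)" for x
    unfolding differentiable_def has_vector_derivative_def by blast
  have "pd [e] h = (\<lambda>x. (\<lambda>_. 0) x + L e)"
    using line by (auto simp: vector_derivative_at)
  then show "pd [e] h \<in> {\<lambda>x. L x + c | L c. linear L}"
    by (intro CollectI exI[of _ "\<lambda>_. 0"] exI[of _ "L e"] conjI linear_zero)
qed

lemma smooth_linear: "linear L \<Longrightarrow> smooth L"
  using smooth_affine[of L 0] by simp

lemma smooth_translate: "smooth (\<lambda>x :: pt. x + c)"
  using smooth_affine[OF linear_id, of c] by (simp add: id_def)

section \<open>The linear maps \<open>C\<^sub>q\<close>\<close>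

lemma linear_Cq: "linear (Cq q)"
  by (rule linearI) (auto simp: Cq_def split: prod.splits simp: add_divide_distrib)

lemma linear_Cq_inv: "linear (Cq_inv q)"
  by (rule linearI) (auto simp: Cq_inv_def split: prod.splits simp: algebra_simps)

lemma bounded_linear_Cq: "bounded_linear (Cq q)"
  using linear_Cq by (simp add: linear_conv_bounded_linear)

lemma bounded_linear_Cq_inv: "bounded_linear (Cq_inv q)"
  using linear_Cq_inv by (simp add: linear_conv_bounded_linear)

lemma Cq_inv_Cq [simp]: "0 < q \<Longrightarrow> Cq_inv q (Cq q v) = v"
  by (cases v) (auto simp: Cq_def Cq_inv_def)

lemma Cq_Cq_inv [simp]: "0 < q \<Longrightarrow> Cq q (Cq_inv q v) = v"
  by (cases v) (auto simp: Cq_def Cq_inv_def)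

lemma Cq_inv_Basis: "e \<in> Basis \<Longrightarrow> Cq_inv q e = (if e = (1, 0) then real q else 1) *\<^sub>R e"
  by (auto simp: Basis_pt Cq_inv_def)

lemma norm_Cq_le:
  assumes "0 < q"
  shows "norm (Cq q v) \<le> norm v"
proof (cases v)
  case (Pair a b)
  have "\<bar>a\<bar> / real q \<le> \<bar>a\<bar>"
    using assms by (simp add: divide_le_eq mult_le_cancel_left1)
  from power_mono[OF this, of 2] have "(a / real q)\<^sup>2 \<le> a\<^sup>2"
    by (simp add: power_divide)
  then show ?thesis
    by (simp add: Pair Cq_def norm_Pair power_divide)
qed

lemma norm_Cq_inv_le:
  assumes "0 < q"
  shows "norm (Cq_inv q v) \<le> real q * norm v"
proof (cases v)
  case (Pair a b)
  have "b\<^sup>2 \<le> (real q)\<^sup>2 * b\<^sup>2"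
    using assms by (simp add: mult_le_cancel_right1 power_le_one_iff)
  then have "sqrt ((real q * a)\<^sup>2 + b\<^sup>2) \<le> sqrt ((real q)\<^sup>2 * (a\<^sup>2 + b\<^sup>2))"
    by (simp add: power_mult_distrib algebra_simps)
  also have "\<dots> = real q * sqrt (a\<^sup>2 + b\<^sup>2)"
    by (simp add: real_sqrt_mult)
  finally show ?thesis
    by (simp add: Pair Cq_inv_def norm_Pair)
qed

lemma dist_Cq_le: "0 < q \<Longrightarrow> dist (Cq q x) (Cq q y) \<le> dist x y"
  using norm_Cq_le[of q "x - y"] linear_Cq[of q] by (simp add: dist_norm linear_diff)

lemma dist_Cq_inv_le: "0 < q \<Longrightarrow> dist (Cq_inv q x) (Cq_inv q y) \<le> real q * dist x y"
  using norm_Cq_inv_le[of q "x - y"] linear_Cq_inv[of q] by (simp add: dist_norm linear_diff)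

lemma smooth_Cq_conj: "smooth G \<Longrightarrow> smooth (Cq_conj q G)"
  unfolding Cq_conj_def o_def
  by (rule smooth_comp[OF smooth_linear[OF linear_Cq]
        smooth_comp[OF _ smooth_linear[OF linear_Cq_inv]]])

lemma Cq_conj_funpow: "0 < q \<Longrightarrow> Cq_conj q F ^^ n = Cq_conj q (F ^^ n)"
  by (induction n) (auto simp: Cq_conj_def)

text \<open>\<open>C\<^sub>q\<^sup>-\<^sup>1\<close> stretches the first coordinate by \<open>q\<close>, so each derivative in the
  direction \<open>(1, 0)\<close> contributes a factor \<open>q\<close>.\<close>

definition Cq_pd_factor :: "nat \<Rightarrow> pt list \<Rightarrow> real" where
  "Cq_pd_factor q es = (\<Prod>e \<leftarrow> es. if e = (1, 0) then real q else 1)"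

lemma pd_Cq_conj:
  assumes "smooth G" "set es \<subseteq> Basis"
  shows "pd es (Cq_conj q G) = (\<lambda>x. Cq_pd_factor q es *\<^sub>R Cq q (pd es G (Cq_inv q x)))"
  using assms(2)
proof (induction es)
  case Nil
  then show ?case
    by (auto simp: Cq_conj_def Cq_pd_factor_def)
next
  case (Cons e es)
  then have e: "e \<in> Basis" and es: "set es \<subseteq> Basis"
    by auto
  define c where "c = (if e = (1, 0) then real q else 1)"
  define \<phi> where "\<phi> = (\<lambda>v. Cq_pd_factor q es *\<^sub>R Cq q v)"
  have "bounded_linear \<phi>"
    unfolding \<phi>_def
    by (rule bounded_linear_compose[OF bounded_linear_scaleR_right bounded_linear_Cq])
  show ?case
  proof
    fix x
    let ?y = "Cq_inv q x"
    have line: "pd es (Cq_conj q G) (x + t *\<^sub>R e) =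
        \<phi> (((\<lambda>s. pd es G (?y + s *\<^sub>R e)) \<circ> (\<lambda>t. c * t)) t)" for t
      using Cons.IH[OF es] Cq_inv_Basis[OF e, of q] linear_Cq_inv[of q]
      by (simp add: \<phi>_def c_def linear_add linear_scale mult.commute)
    have "((\<lambda>t. c * t) has_vector_derivative c) (at 0)"
      by (auto intro!: derivative_eq_intros)
    from vector_diff_chain_at[OF this, of "\<lambda>s. pd es G (?y + s *\<^sub>R e)"]
      smooth_has_vector_derivative[OF smooth_pd[OF assms(1) es] e, of ?y]
    have "(((\<lambda>s. pd es G (?y + s *\<^sub>R e)) \<circ> (\<lambda>t. c * t))
        has_vector_derivative c *\<^sub>R pd (e # es) G ?y) (at 0)"
      by (simp add: pd_append)
    from bounded_linear.has_vector_derivative[OF \<open>bounded_linear \<phi>\<close> this]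
    have "pd (e # es) (Cq_conj q G) x = \<phi> (c *\<^sub>R pd (e # es) G ?y)"
      unfolding line[symmetric] by (simp only: pd.simps vector_derivative_at)
    then show "pd (e # es) (Cq_conj q G) x = Cq_pd_factor q (e # es) *\<^sub>R Cq q (pd (e # es) G ?y)"
      using linear_Cq[of q] by (simp add: \<phi>_def linear_scale Cq_pd_factor_def c_def)
  qed
qed

lemma Cinf_conv_Cq_conj:
  assumes "\<And>n. smooth (Fs n)" "smooth F" "Cinf_conv Fs F"
  shows "Cinf_conv (\<lambda>n. Cq_conj q (Fs n)) (Cq_conj q F)"
  unfolding Cinf_conv_def
proof (intro allI impI)
  fix es :: "pt list"
  assume es: "set es \<subseteq> Basis"
  have "uniform_limit UNIV (\<lambda>n. pd es (Fs n)) (pd es F) sequentially"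
    using assms(3) es unfolding Cinf_conv_def by blast
  from uniform_limit_compose'[OF this, of "Cq_inv q" UNIV]
  have "uniform_limit UNIV (\<lambda>n x. pd es (Fs n) (Cq_inv q x)) (\<lambda>x. pd es F (Cq_inv q x))
      sequentially"
    by simp
  moreover have "bounded_linear (\<lambda>v. Cq_pd_factor q es *\<^sub>R Cq q v)"
    by (rule bounded_linear_compose[OF bounded_linear_scaleR_right bounded_linear_Cq])
  ultimately show "uniform_limit UNIV (\<lambda>n. pd es (Cq_conj q (Fs n))) (pd es (Cq_conj q F))
      sequentially"
    unfolding pd_Cq_conj[OF assms(1) es] pd_Cq_conj[OF assms(2) es]
    by (rule bounded_linear.uniform_limit[rotated])
qed

section \<open>Lifts of torus maps and their action on \<open>\<int>\<^sup>2\<close>\<close>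

lemma Z2_iff: "(a, b) \<in> Z2 \<longleftrightarrow> a \<in> \<int> \<and> b \<in> \<int>"
  by (auto simp: Z2_def)

lemma Z2_mem_iff: "p \<in> Z2 \<longleftrightarrow> fst p \<in> \<int> \<and> snd p \<in> \<int>"
  by (cases p) (simp add: Z2_iff)

lemma zero_in_Z2: "0 \<in> Z2"
  by (simp add: Z2_mem_iff)

lemma Z2_of_int_scaleR: "p \<in> Z2 \<Longrightarrow> of_int n *\<^sub>R p \<in> Z2"
  by (simp add: Z2_mem_iff)

lemma Cq_inv_Z2: "p \<in> Z2 \<Longrightarrow> Cq_inv q p \<in> Z2"
  by (cases p) (auto simp: Cq_inv_def Z2_iff)

lemma continuous_Ints_valued_const:
  fixes f :: "'a::topological_space \<Rightarrow> real"
  assumes "connected S" "continuous_on S f" "\<And>x. x \<in> S \<Longrightarrow> f x \<in> \<int>" "x \<in> S" "y \<in> S"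
  shows "f x = f y"
proof -
  have "f constant_on S"
    using assms(1,2) by (rule continuous_discrete_range_constant)
      (use assms(3) Ints_nonzero_abs_ge1[OF Ints_diff] in \<open>auto intro!: exI[of _ 1]\<close>)
  then show ?thesis
    using assms(4,5) unfolding constant_on_def by metis
qed

text \<open>The action of \<open>H\<close> on \<open>H\<^sub>1(T\<^sup>2) = \<int>\<^sup>2\<close>, extended linearly to \<open>\<real>\<^sup>2\<close>.\<close>

definition homology_map :: "(pt \<Rightarrow> pt) \<Rightarrow> pt \<Rightarrow> pt" where
  "homology_map H w = fst w *\<^sub>R (H (1, 0) - H 0) + snd w *\<^sub>R (H (0, 1) - H 0)"

lemma linear_homology_map: "linear (homology_map H)"
  by (rule linearI) (auto simp: homology_map_def algebra_simps)

locale torus_map_lift =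
  fixes H :: "pt \<Rightarrow> pt"
  assumes continuous: "continuous_on UNIV H"
    and periodic: "\<And>x m. m \<in> Z2 \<Longrightarrow> H (x + m) - H x \<in> Z2"
begin

lemma translate_displacement: "m \<in> Z2 \<Longrightarrow> H (x + m) - H x = H m - H 0"
proof -
  assume m: "m \<in> Z2"
  have c: "continuous_on UNIV (\<lambda>x. H (x + m) - H x)"
    by (intro continuous_intros continuous_on_compose2[OF continuous]) auto
  have "fst (H (x + m) - H x) = fst (H (0 + m) - H 0)"
    by (rule continuous_Ints_valued_const[OF connected_UNIV continuous_on_fst[OF c]])
      (use periodic[OF m] in \<open>simp_all add: Z2_mem_iff\<close>)
  moreover have "snd (H (x + m) - H x) = snd (H (0 + m) - H 0)"
    by (rule continuous_Ints_valued_const[OF connected_UNIV continuous_on_snd[OF c]])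
      (use periodic[OF m] in \<open>simp_all add: Z2_mem_iff\<close>)
  ultimately show ?thesis
    by (simp add: prod_eq_iff)
qed

lemma displacement_add:
  "m \<in> Z2 \<Longrightarrow> m' \<in> Z2 \<Longrightarrow> H (m + m') - H 0 = (H m - H 0) + (H m' - H 0)"
proof -
  assume "m \<in> Z2" "m' \<in> Z2"
  have "H (m + m') - H 0 = (H (m + m') - H m) + (H m - H 0)"
    by simp
  also have "\<dots> = (H m - H 0) + (H m' - H 0)"
    using translate_displacement[OF \<open>m' \<in> Z2\<close>, of m] by simp
  finally show ?thesis .
qed

lemma displacement_of_int:
  assumes "m \<in> Z2"
  shows "H (of_int n *\<^sub>R m) - H 0 = of_int n *\<^sub>R (H m - H 0)"
proof (induction n rule: int_induct[of _ 0])
  case (step1 i)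
  have "of_int i *\<^sub>R m + m = of_int (i + 1) *\<^sub>R m"
    by (simp add: algebra_simps)
  from displacement_add[OF Z2_of_int_scaleR[OF assms] assms, of i, unfolded this]
  have "H (of_int (i + 1) *\<^sub>R m) - H 0 = (H (of_int i *\<^sub>R m) - H 0) + (H m - H 0)" .
  also have "\<dots> = of_int (i + 1) *\<^sub>R (H m - H 0)"
    using step1 by (simp add: algebra_simps)
  finally show ?case .
next
  case (step2 i)
  have "of_int (i - 1) *\<^sub>R m + m = of_int i *\<^sub>R m"
    by (simp add: algebra_simps)
  from displacement_add[OF Z2_of_int_scaleR[OF assms] assms, of "i - 1", unfolded this]
  have "H (of_int (i - 1) *\<^sub>R m) - H 0 = (H (of_int i *\<^sub>R m) - H 0) - (H m - H 0)"
    by (simp only: add_diff_cancel)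
  also have "\<dots> = of_int (i - 1) *\<^sub>R (H m - H 0)"
    using step2 by (simp add: algebra_simps)
  finally show ?case .
qed simp

lemma homology_map_Z2: "m \<in> Z2 \<Longrightarrow> homology_map H m = H m - H 0"
proof -
  assume "m \<in> Z2"
  then obtain a b where ab: "m = of_int a *\<^sub>R (1, 0) + of_int b *\<^sub>R (0, 1)"
    by (cases m) (auto simp: Z2_iff elim!: Ints_cases)
  have "(1 :: real, 0 :: real) \<in> Z2" "(0 :: real, 1 :: real) \<in> Z2"
    by (auto simp: Z2_iff)
  then have "H m - H 0 = (H (of_int a *\<^sub>R (1, 0)) - H 0) + (H (of_int b *\<^sub>R (0, 1)) - H 0)"
    unfolding ab by (intro displacement_add Z2_of_int_scaleR)
  also have "\<dots> = of_int a *\<^sub>R (H (1, 0) - H 0) + of_int b *\<^sub>R (H (0, 1) - H 0)"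
    using displacement_of_int \<open>(1, 0) \<in> Z2\<close> \<open>(0, 1) \<in> Z2\<close> by (simp only:)
  also have "\<dots> = homology_map H m"
    by (simp add: homology_map_def ab)
  finally show ?thesis
    by simp
qed

lemma translate: "m \<in> Z2 \<Longrightarrow> H (x + m) = H x + homology_map H m"
  using translate_displacement[of m x] homology_map_Z2[of m] by (metis add.commute diff_add_cancel)

lemma homology_map_in_Z2: "m \<in> Z2 \<Longrightarrow> homology_map H m \<in> Z2"
  using periodic[of m 0] homology_map_Z2[of m] by simp

end

lemma homology_map_left_inverse:
  assumes "torus_map_lift H" "torus_map_lift H'" "\<And>x. H' (H x) = x"
  shows "homology_map H' (homology_map H w) = w"
proof -
  have Z2_inverse: "homology_map H' (homology_map H m) = m" if "m \<in> Z2" for m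
  proof -
    have "m = H' (H (0 + m))"
      by (simp add: assms(3))
    also have "\<dots> = H' (H 0) + homology_map H' (homology_map H m)"
      using torus_map_lift.translate[OF assms(1) that, of 0]
        torus_map_lift.translate[OF assms(2) torus_map_lift.homology_map_in_Z2[OF assms(1) that]]
      by simp
    finally show ?thesis
      by (simp add: assms(3))
  qed
  have "homology_map H w = fst w *\<^sub>R homology_map H (1, 0) + snd w *\<^sub>R homology_map H (0, 1)"
    by (simp add: homology_map_def)
  then have "homology_map H' (homology_map H w) =
      fst w *\<^sub>R homology_map H' (homology_map H (1, 0)) +
      snd w *\<^sub>R homology_map H' (homology_map H (0, 1))"
    using linear_homology_map[of H'] by (simp add: linear_add linear_scale)
  also have "\<dots> = w"
    using Z2_inverse[of "(1, 0)"] Z2_inverse[of "(0, 1)"] by (simp add: Z2_iff)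
  finally show ?thesis .
qed

section \<open>Conjugates of rotations\<close>

lemma torus_diffeo_liftD:
  assumes "torus_diffeo_lift H"
  shows "torus_map_lift H" "torus_map_lift (inv H)" "inv H (H x) = x" "H (inv H y) = y"
    "smooth H" "smooth (inv H)"
proof -
  have "bij H" "smooth H" "smooth (inv H)"
    and "\<And>x m. m \<in> Z2 \<Longrightarrow> H (x + m) - H x \<in> Z2"
    and "\<And>x m. m \<in> Z2 \<Longrightarrow> inv H (x + m) - inv H x \<in> Z2"
    using assms unfolding torus_diffeo_lift_def by blast+
  then show "torus_map_lift H" "torus_map_lift (inv H)" "inv H (H x) = x" "H (inv H y) = y"
    "smooth H" "smooth (inv H)"
    by (simp_all add: torus_map_lift_def smooth_imp_continuous bij_is_inj bij_is_surj surj_f_inv_f)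
qed

lemma commutes_Z2_inverse:
  assumes "commutes_Z2 F" "\<And>x. F' (F x) = x" "\<And>y. F (F' y) = y"
  shows "commutes_Z2 F'"
  unfolding commutes_Z2_def
proof (intro allI impI)
  fix y m
  assume "m \<in> Z2"
  then have "F (F' y + m) = y + m"
    using assms(1,3) unfolding commutes_Z2_def by metis
  then show "F' (y + m) = F' y + m"
    using assms(2) by metis
qed

lemma torus_diffeo_lift_of_inverses:
  assumes "\<And>x. G' (G x) = x" "\<And>y. G (G' y) = y" "smooth G" "smooth G'"
    and "commutes_Z2 G"
  shows "torus_diffeo_lift G" "inv G = G'"
proof -
  show inv_G: "inv G = G'"
    using assms(1,2) by (intro inv_equality) auto
  have "commutes_Z2 G'"
    using assms(5,1,2) by (rule commutes_Z2_inverse)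
  moreover have "bij G"
    using assms(1,2) by (intro o_bij[of G']) auto
  ultimately show "torus_diffeo_lift G"
    using assms(3-5) unfolding torus_diffeo_lift_def commutes_Z2_def inv_G by auto
qed

text \<open>Precomposing \<open>h\<close> with the inverse of its action on \<open>\<int>\<^sup>2\<close> makes it homotopic to the
  identity, and the integer translation of the lift is absorbed into the rotation.\<close>

lemma conj_rot_lifts_homotopic_conjugacy:
  assumes "F \<in> conj_rot_lifts"
  obtains G \<theta> where "torus_diffeo_lift G" "commutes_Z2 G" "F = (\<lambda>x. G (inv G x + \<theta>))"
proof -
  obtain H \<theta> m where F: "F = (\<lambda>x. H (inv H x + \<theta>) + m)" and H: "torus_diffeo_lift H" and m: "m \<in> Z2"
    using assms unfolding conj_rot_lifts_def by blast
  note H = torus_diffeo_liftD[OF H]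
  define A where "A = homology_map (inv H)"
  define B where "B = homology_map H"
  have BA: "B (A w) = w" and AB: "A (B w) = w" for w
    unfolding A_def B_def using homology_map_left_inverse H(1-4) by metis+
  have lin: "linear A" "linear B"
    unfolding A_def B_def by (fact linear_homology_map)+
  define G where "G = (\<lambda>x. H (A x))"
  define G' where "G' = (\<lambda>y. B (inv H y))"
  have Am: "A m' \<in> Z2" if "m' \<in> Z2" for m'
    unfolding A_def using H(2) that by (rule torus_map_lift.homology_map_in_Z2)
  have "commutes_Z2 G"
    unfolding commutes_Z2_def G_def
    using lin(1) torus_map_lift.translate[OF H(1) Am] by (simp add: linear_add BA[unfolded B_def])
  moreover have "smooth G" "smooth G'"
    unfolding G_def G'_def
    by (rule smooth_comp[OF H(5) smooth_linear[OF lin(1)]],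
        rule smooth_comp[OF smooth_linear[OF lin(2)] H(6)])
  moreover have "G' (G x) = x" "G (G' y) = y" for x y
    by (simp_all add: G_def G'_def H(3,4) AB BA)
  ultimately have G: "torus_diffeo_lift G" "inv G = G'" "commutes_Z2 G"
    using torus_diffeo_lift_of_inverses[of G' G] by auto
  have "F x = G (inv G x + B (\<theta> + A m))" for x
  proof -
    have "F x = H (inv H x + \<theta> + A m)"
      using torus_map_lift.translate[OF H(1) Am[OF m]] BA[of m] by (simp add: F B_def)
    also have "\<dots> = G (G' x + B (\<theta> + A m))"
      using lin by (simp add: G_def G'_def linear_add AB add.assoc)
    also have "\<dots> = G (inv G x + B (\<theta> + A m))"
      by (simp add: G(2))
    finally show ?thesis .
  qed
  then show ?thesis
    using G that by blast
qed

lemma smooth_conj_rot_lifts: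
  assumes "F \<in> conj_rot_lifts"
  shows "smooth F"
proof -
  obtain H \<theta> m where F: "F = (\<lambda>x. H (inv H x + \<theta>) + m)" and H: "torus_diffeo_lift H"
    using assms unfolding conj_rot_lifts_def by blast
  have "smooth (\<lambda>x. inv H x + \<theta>)"
    by (rule smooth_comp[OF smooth_translate torus_diffeo_liftD(6)[OF H]])
  then have "smooth (\<lambda>x. H (inv H x + \<theta>))"
    by (rule smooth_comp[OF torus_diffeo_liftD(5)[OF H]])
  then show ?thesis
    unfolding F by (rule smooth_comp[OF smooth_translate])
qed

lemma commutes_Z2_Cq_conj:
  assumes "0 < q" "commutes_Z2 G"
  shows "commutes_Z2 (Cq_conj q G)"
  unfolding commutes_Z2_def
proof (intro allI impI)
  fix x m
  assume "m \<in> Z2"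
  then have "G (Cq_inv q x + Cq_inv q m) = G (Cq_inv q x) + Cq_inv q m"
    using assms(2) Cq_inv_Z2 unfolding commutes_Z2_def by blast
  then show "Cq_conj q G (x + m) = Cq_conj q G x + m"
    using linear_Cq[of q] linear_Cq_inv[of q] assms(1)
    by (simp add: Cq_conj_def linear_add)
qed

lemma torus_diffeo_lift_Cq_conj:
  assumes "0 < q" "torus_diffeo_lift G" "commutes_Z2 G"
  shows "torus_diffeo_lift (Cq_conj q G)" "inv (Cq_conj q G) = Cq_conj q (inv G)"
proof -
  note G = torus_diffeo_liftD[OF assms(2)]
  have "Cq_conj q (inv G) (Cq_conj q G x) = x" "Cq_conj q G (Cq_conj q (inv G) y) = y" for x y
    using assms(1) by (simp_all add: Cq_conj_def G(3,4))
  moreover have "smooth (Cq_conj q G)" "smooth (Cq_conj q (inv G))"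
    using G(5,6) by (simp_all add: smooth_Cq_conj)
  ultimately show "torus_diffeo_lift (Cq_conj q G)" "inv (Cq_conj q G) = Cq_conj q (inv G)"
    using torus_diffeo_lift_of_inverses commutes_Z2_Cq_conj[OF assms(1,3)] by blast+
qed

lemma Cq_conj_conj_rot_lifts:
  assumes "0 < q" "F \<in> conj_rot_lifts"
  shows "Cq_conj q F \<in> conj_rot_lifts"
proof -
  obtain G \<theta> where G: "torus_diffeo_lift G" "commutes_Z2 G" and F: "F = (\<lambda>x. G (inv G x + \<theta>))"
    using conj_rot_lifts_homotopic_conjugacy[OF assms(2)] by blast
  have "Cq_conj q F = (\<lambda>x. Cq_conj q G (inv (Cq_conj q G) x + Cq q \<theta>) + 0)"
    unfolding torus_diffeo_lift_Cq_conj(2)[OF assms(1) G]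
    using linear_Cq_inv[of q] assms(1) by (simp add: F Cq_conj_def linear_add o_def)
  then show ?thesis
    unfolding conj_rot_lifts_def using torus_diffeo_lift_Cq_conj(1)[OF assms(1) G] zero_in_Z2
    by (intro CollectI exI[of _ "Cq_conj q G"] exI[of _ "Cq q \<theta>"] exI[of _ 0] conjI)
qed

lemma Obar_lifts_Cq_conj:
  assumes "0 < q" "F \<in> Obar_lifts"
  shows "Cq_conj q F \<in> Obar_lifts"
proof -
  obtain Fs where F: "torus_diffeo_lift F" "commutes_Z2 F"
    and Fs: "\<And>n. Fs n \<in> conj_rot_lifts" "Cinf_conv Fs F"
    using assms(2) unfolding Obar_lifts_def by blast
  have "Cinf_conv (\<lambda>n. Cq_conj q (Fs n)) (Cq_conj q F)"
    using Cinf_conv_Cq_conj smooth_conj_rot_lifts[OF Fs(1)] torus_diffeo_liftD(5)[OF F(1)] Fs(2)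
    by blast
  then show ?thesis
    unfolding Obar_lifts_def
    using torus_diffeo_lift_Cq_conj(1)[OF assms(1) F] commutes_Z2_Cq_conj[OF assms(1) F(2)]
      Cq_conj_conj_rot_lifts[OF assms(1) Fs(1)]
    by (intro CollectI conjI exI[of _ "\<lambda>n. Cq_conj q (Fs n)"] allI)
qed

section \<open>Hausdorff closeness\<close>

definition hausdorff_close :: "'a::metric_space set \<Rightarrow> 'a set \<Rightarrow> real \<Rightarrow> bool" where
  "hausdorff_close A B e \<longleftrightarrow> (\<forall>a\<in>A. \<exists>b\<in>B. dist a b \<le> e) \<and> (\<forall>b\<in>B. \<exists>a\<in>A. dist a b \<le> e)"

lemma hausdorff_close_sym: "hausdorff_close A B e \<Longrightarrow> hausdorff_close B A e"
  unfolding hausdorff_close_def by (metis dist_commute)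

lemma hausdorff_close_mono: "hausdorff_close A B e \<Longrightarrow> e \<le> d \<Longrightarrow> hausdorff_close A B d"
  unfolding hausdorff_close_def by (meson order_trans)

lemma hausdorff_close_nonneg:
  assumes "hausdorff_close A B e" "A \<noteq> {}"
  shows "0 \<le> e"
proof -
  obtain a where "a \<in> A"
    using assms(2) by blast
  then obtain b where "dist a b \<le> e"
    using assms(1) unfolding hausdorff_close_def by blast
  then show ?thesis
    using zero_le_dist[of a b] by linarith
qed

lemma hausdorff_close_trans:
  assumes "hausdorff_close A B e" "hausdorff_close B C d"
  shows "hausdorff_close A C (e + d)"
  unfolding hausdorff_close_def
proof (intro conjI ballI)
  fix a
  assume "a \<in> A"
  then obtain b c where "b \<in> B" "dist a b \<le> e" "c \<in> C" "dist b c \<le> d"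
    using assms unfolding hausdorff_close_def by blast
  then show "\<exists>c\<in>C. dist a c \<le> e + d"
    using dist_triangle[of a c b] by (intro bexI[of _ c]) auto
next
  fix c
  assume "c \<in> C"
  then obtain a b where "b \<in> B" "dist b c \<le> d" "a \<in> A" "dist a b \<le> e"
    using assms unfolding hausdorff_close_def by blast
  then show "\<exists>a\<in>A. dist a c \<le> e + d"
    using dist_triangle[of a c b] by (intro bexI[of _ a]) auto
qed

lemma hausdorff_close_lipschitz_image:
  assumes "hausdorff_close A B e" "\<And>x y. dist (f x) (f y) \<le> L * dist x y" "0 \<le> L"
  shows "hausdorff_close (f ` A) (f ` B) (L * e)"
proof -
  have "dist (f a) (f b) \<le> L * e" if "dist a b \<le> e" for a b
    using assms(2)[of a b] mult_left_mono[OF that assms(3)] by linarith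
  then show ?thesis
    using assms(1) unfolding hausdorff_close_def by fast
qed

lemma hausdorff_close_images:
  assumes "\<And>x. x \<in> S \<Longrightarrow> dist (f x) (g x) \<le> e"
  shows "hausdorff_close (f ` S) (g ` S) e"
  using assms unfolding hausdorff_close_def by blast

lemma diameter_le_hausdorff_close:
  fixes A B :: "'a::real_normed_vector set"
  assumes "bounded B" "B \<noteq> {}" "hausdorff_close A B e"
  shows "diameter A \<le> diameter B + 2 * e"
proof (rule diameter_le)
  show "A \<noteq> {} \<or> 0 \<le> diameter B + 2 * e"
    using hausdorff_close_nonneg[OF hausdorff_close_sym[OF assms(3)] assms(2)]
      diameter_ge_0[OF assms(1)]
    by simp
  fix x y
  assume "x \<in> A" "y \<in> A"
  then obtain b1 b2 where "b1 \<in> B" "dist x b1 \<le> e" "b2 \<in> B" "dist y b2 \<le> e"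
    using assms(3) unfolding hausdorff_close_def by blast
  moreover from this have "dist b1 b2 \<le> diameter B"
    using assms(1) by (intro diameter_bounded_bound)
  ultimately show "norm (x - y) \<le> diameter B + 2 * e"
    using dist_triangle[of x y b1] dist_triangle[of b1 y b2] by (simp add: dist_commute dist_norm)
qed

lemma diameter_lipschitz_image:
  fixes f :: "'a::real_normed_vector \<Rightarrow> 'b::real_normed_vector"
  assumes "bounded S" "\<And>x y. dist (f x) (f y) \<le> L * dist x y" "0 \<le> L"
  shows "diameter (f ` S) \<le> L * diameter S"
proof (rule diameter_le)
  show "f ` S \<noteq> {} \<or> 0 \<le> L * diameter S"
    using assms(1,3) diameter_ge_0 by simp
  fix x y
  assume "x \<in> f ` S" "y \<in> f ` S"
  then obtain a b where ab: "a \<in> S" "b \<in> S" "x = f a" "y = f b"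
    by blast
  then have "dist (f a) (f b) \<le> L * diameter S"
    using assms(2)[of a b] mult_left_mono[OF diameter_bounded_bound[OF assms(1) ab(1,2)] assms(3)]
    by linarith
  then show "norm (x - y) \<le> L * diameter S"
    by (simp add: ab dist_norm)
qed

lemma diameter_homothety_image:
  fixes S :: "'a::real_normed_vector set"
  assumes "bounded S" "0 < c"
  shows "diameter ((\<lambda>x. c *\<^sub>R x + v) ` S) = c * diameter S"
proof (rule antisym)
  show "diameter ((\<lambda>x. c *\<^sub>R x + v) ` S) \<le> c * diameter S"
    using assms
    by (intro diameter_lipschitz_image) (auto simp: dist_norm simp flip: scaleR_right_diff_distrib)
  have "(\<lambda>x. c *\<^sub>R x + v) ` S = (\<lambda>x. v + x) ` (\<lambda>x. c *\<^sub>R x) ` S"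
    by (auto simp: image_image add.commute)
  then have "bounded ((\<lambda>x. c *\<^sub>R x + v) ` S)"
    using bounded_translation[OF bounded_scaling[OF assms(1)]] by simp
  then have "diameter ((\<lambda>x. (1 / c) *\<^sub>R x + (- (1 / c) *\<^sub>R v)) ` (\<lambda>x. c *\<^sub>R x + v) ` S)
      \<le> (1 / c) * diameter ((\<lambda>x. c *\<^sub>R x + v) ` S)"
    using assms(2)
    by (intro diameter_lipschitz_image) (auto simp: dist_norm simp flip: scaleR_right_diff_distrib)
  moreover have "(\<lambda>x. (1 / c) *\<^sub>R x + (- (1 / c) *\<^sub>R v)) ` (\<lambda>x. c *\<^sub>R x + v) ` S = S"
    using assms(2) by (force simp: image_image algebra_simps)
  ultimately have "diameter S \<le> (1 / c) * diameter ((\<lambda>x. c *\<^sub>R x + v) ` S)"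
    by simp
  then show "c * diameter S \<le> diameter ((\<lambda>x. c *\<^sub>R x + v) ` S)"
    using assms(2) by (simp add: field_simps)
qed

lemma hausdorff_close_rescale:
  fixes T :: "'a::real_normed_vector set"
  assumes "bounded T" "t0 \<in> T"
  shows "hausdorff_close ((\<lambda>x. a *\<^sub>R x) ` T) ((\<lambda>x. b *\<^sub>R x + (a - b) *\<^sub>R t0) ` T)
    (\<bar>a - b\<bar> * diameter T)"
proof (rule hausdorff_close_images)
  fix x
  assume "x \<in> T"
  have "a *\<^sub>R x - (b *\<^sub>R x + (a - b) *\<^sub>R t0) = (a - b) *\<^sub>R (x - t0)"
    by (simp add: algebra_simps)
  then have "dist (a *\<^sub>R x) (b *\<^sub>R x + (a - b) *\<^sub>R t0) = \<bar>a - b\<bar> * dist x t0"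
    by (simp add: dist_norm)
  also have "\<dots> \<le> \<bar>a - b\<bar> * diameter T"
    using diameter_bounded_bound[OF assms(1) \<open>x \<in> T\<close> assms(2)] by (simp add: mult_left_mono)
  finally show "dist (a *\<^sub>R x) (b *\<^sub>R x + (a - b) *\<^sub>R t0) \<le> \<bar>a - b\<bar> * diameter T" .
qed

lemma hausdorff_close_hausdorff_dist:
  assumes "compact A" "A \<noteq> {}" "compact B" "B \<noteq> {}"
  shows "hausdorff_close A B (hausdorff_dist A B)"
proof -
  have nearest: "\<exists>b\<in>Y. dist a b \<le> (SUP a\<in>X. infdist a Y)"
    if "compact X" "compact Y" "Y \<noteq> {}" "a \<in> X" for X Y :: "pt set" and a
  proof -
    obtain b where "b \<in> Y" "infdist a Y = dist a b"
      using infdist_attains_inf[OF compact_imp_closed[OF \<open>compact Y\<close>] \<open>Y \<noteq> {}\<close>] by blast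
    moreover have "bdd_above ((\<lambda>a. infdist a Y) ` X)"
      using that by (intro bounded_imp_bdd_above compact_imp_bounded compact_continuous_image
          continuous_intros)
    then have "infdist a Y \<le> (SUP a\<in>X. infdist a Y)"
      by (rule cSUP_upper[OF \<open>a \<in> X\<close>])
    ultimately show ?thesis
      by auto
  qed
  show ?thesis
    unfolding hausdorff_close_def hausdorff_dist_def
  proof (intro conjI ballI)
    fix a
    assume "a \<in> A"
    then obtain b where "b \<in> B" "dist a b \<le> (SUP a\<in>A. infdist a B)"
      using nearest[OF assms(1,3,4)] by blast
    then show "\<exists>b\<in>B. dist a b \<le> max (SUP a\<in>A. infdist a B) (SUP b\<in>B. infdist b A)"
      by (auto intro: max.coboundedI1)
  next
    fix b
    assume "b \<in> B"
    then obtain a where "a \<in> A" "dist b a \<le> (SUP b\<in>B. infdist b A)"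
      using nearest[OF assms(3,1,2)] by blast
    then show "\<exists>a\<in>A. dist a b \<le> max (SUP a\<in>A. infdist a B) (SUP b\<in>B. infdist b A)"
      by (auto simp: dist_commute intro: max.coboundedI2)
  qed
qed

lemma hausdorff_dist_le:
  assumes "A \<noteq> {}" "B \<noteq> {}" "hausdorff_close A B e"
  shows "hausdorff_dist A B \<le> e"
  unfolding hausdorff_dist_def
proof (rule max.boundedI)
  show "(SUP a\<in>A. infdist a B) \<le> e"
  proof (rule cSUP_least[OF assms(1)])
    fix a
    assume "a \<in> A"
    then obtain b where "b \<in> B" "dist a b \<le> e"
      using assms(3) unfolding hausdorff_close_def by blast
    then show "infdist a B \<le> e"
      using infdist_le[of b B a] by linarith
  qed
  show "(SUP b\<in>B. infdist b A) \<le> e"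
  proof (rule cSUP_least[OF assms(2)])
    fix b
    assume "b \<in> B"
    then obtain a where "a \<in> A" "dist a b \<le> e"
      using assms(3) unfolding hausdorff_close_def by blast
    then show "infdist b A \<le> e"
      using infdist_le[of a A b] by (simp add: dist_commute)
  qed
qed

section \<open>Approximate shapes of large sets\<close>

lemma diameter_margin_arith:
  fixes q k d g \<epsilon> :: real
  assumes "1 \<le> q" "0 < k" "20 * q\<^sup>2 * (k + 1) < d" "\<epsilon> \<le> q + d / (20 * q\<^sup>2 * (k + 1))" "1 \<le> g * q"
  shows "k * (1 + 3 * \<epsilon>) + 2 * \<epsilon> < d * g"
proof -
  define D where "D = d / q"
  have q: "0 < q" "k \<le> q * k"
    using assms(1,2) by simp_all
  have a: "0 < 20 * q * (k + 1)"
    using q assms(2) by simp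
  have d: "d = D * q"
    using q by (simp add: D_def)
  have D: "20 * q * (k + 1) < D"
    using assms(3) q unfolding d by (simp add: power2_eq_square mult_ac)
  have "\<epsilon> \<le> q + D / (20 * q * (k + 1))"
    using assms(4) q assms(2) unfolding d by (simp add: power2_eq_square mult_ac)
  then have "(3 * k + 2) * \<epsilon> \<le> (3 * k + 2) * (q + D / (20 * q * (k + 1)))"
    using assms(2) by (intro mult_left_mono) auto
  also have "\<dots> = (3 * k + 2) * q + (3 * k + 2) / (20 * q * (k + 1)) * D"
    by (simp add: distrib_left)
  also have "(3 * k + 2) / (20 * q * (k + 1)) * D \<le> 3 / 20 * D"
    using a q assms(1) D by (intro mult_right_mono) (simp_all add: pos_divide_le_eq algebra_simps)
  finally have \<epsilon>: "(3 * k + 2) * \<epsilon> \<le> (3 * k + 2) * q + 3 / 20 * D"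
    by simp
  have "k * (1 + 3 * \<epsilon>) + 2 * \<epsilon> = k + (3 * k + 2) * \<epsilon>"
    by (simp add: algebra_simps)
  also have "\<dots> \<le> k + (3 * k + 2) * q + 3 / 20 * D"
    using \<epsilon> by simp
  also have "\<dots> < D"
  proof -
    have "(3 * k + 2) * q = 3 * (q * k) + 2 * q" "20 * q * (k + 1) = 20 * (q * k) + 20 * q"
      by (simp_all add: algebra_simps)
    then show ?thesis
      using D q assms(2) by linarith
  qed
  also have "\<dots> \<le> D * (g * q)"
    using mult_left_mono[OF assms(5), of D] a D by simp
  finally show ?thesis
    unfolding d by (simp add: mult_ac)
qed

lemma homothety_class_image:
  assumes "S \<in> homothety_class K0" "0 < a"
  shows "(\<lambda>x. a *\<^sub>R x + w) ` S \<in> homothety_class K0"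
proof -
  obtain c v where S: "S = (\<lambda>x. c *\<^sub>R x + v) ` K0" "0 < c"
    using assms(1) unfolding homothety_class_def by blast
  have "(\<lambda>x. a *\<^sub>R x + w) ` S = (\<lambda>x. (a * c) *\<^sub>R x + (a *\<^sub>R v + w)) ` K0"
    unfolding S image_image by (simp add: algebra_simps)
  moreover have "0 < a * c"
    using S(2) assms(2) by simp
  ultimately show ?thesis
    unfolding homothety_class_def by blast
qed

lemma Hspace_compact:
  assumes "\<Gamma> \<in> Hspace" "S \<in> \<Gamma>"
  shows "compact S" "S \<noteq> {}"
proof -
  obtain K0 c v where "compact K0" "K0 \<noteq> {}" "S = (\<lambda>x. c *\<^sub>R x + v) ` K0"
    using assms unfolding Hspace_def homothety_class_def by blast
  then show "compact S" "S \<noteq> {}"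
    by (auto intro!: compact_continuous_image continuous_intros)
qed

lemma Cq_inv_class_Hspace:
  assumes "0 < q" "\<Gamma> \<in> Hspace"
  shows "Cq_inv_class q \<Gamma> \<in> Hspace"
proof -
  obtain K0 where \<Gamma>: "\<Gamma> = homothety_class K0" "compact K0" "K0 \<noteq> {}"
    using assms(2) unfolding Hspace_def by blast
  have Cq_inv_image: "Cq_inv q ` (\<lambda>x. c *\<^sub>R x + v) ` K0 = (\<lambda>x. c *\<^sub>R x + Cq_inv q v) ` Cq_inv q ` K0"
    for c v
    using linear_Cq_inv[of q] by (simp add: image_image linear_add linear_scale)
  have "Cq_inv_class q \<Gamma> = homothety_class (Cq_inv q ` K0)"
  proof
    show "Cq_inv_class q \<Gamma> \<subseteq> homothety_class (Cq_inv q ` K0)"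
    proof
      fix S
      assume "S \<in> Cq_inv_class q \<Gamma>"
      then obtain c v where "0 < c" "S = Cq_inv q ` (\<lambda>x. c *\<^sub>R x + v) ` K0"
        unfolding Cq_inv_class_def \<Gamma>(1) homothety_class_def by blast
      then show "S \<in> homothety_class (Cq_inv q ` K0)"
        unfolding homothety_class_def Cq_inv_image by blast
    qed
    show "homothety_class (Cq_inv q ` K0) \<subseteq> Cq_inv_class q \<Gamma>"
    proof
      fix S
      assume "S \<in> homothety_class (Cq_inv q ` K0)"
      then obtain c v where "0 < c" "S = (\<lambda>x. c *\<^sub>R x + Cq_inv q (Cq q v)) ` Cq_inv q ` K0"
        using assms(1) unfolding homothety_class_def by auto
      then show "S \<in> Cq_inv_class q \<Gamma>"
        unfolding Cq_inv_class_def \<Gamma>(1) homothety_class_def Cq_inv_image[symmetric] by blast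
    qed
  qed
  moreover have "compact (Cq_inv q ` K0)"
    using \<Gamma>(2) by (intro compact_continuous_image linear_continuous_on bounded_linear_Cq_inv)
  ultimately show ?thesis
    using \<Gamma>(3) unfolding Hspace_def by blast
qed

lemma LA_hausdorff_close:
  assumes "\<Gamma> \<in> Hspace" "K \<in> LA r \<Gamma>" "0 < r"
  obtains S where "S \<in> \<Gamma>" "diameter S = 1" "r < diameter K"
    "hausdorff_close K ((\<lambda>x. diameter K *\<^sub>R x) ` S) (diameter K / r)"
proof -
  define d where "d = diameter K"
  obtain S where K: "compact K" "K \<noteq> {}" "r < d" and S: "S \<in> \<Gamma>" "diameter S = 1"
    and hd: "hausdorff_dist ((\<lambda>x. (1 / d) *\<^sub>R x) ` K) S < 1 / r"
    using assms(2) unfolding LA_def d_def by blast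
  have "hausdorff_close ((\<lambda>x. (1 / d) *\<^sub>R x) ` K) S (1 / r)"
    using K Hspace_compact[OF assms(1) S(1)] hausdorff_close_hausdorff_dist hd
    by (intro hausdorff_close_mono[OF hausdorff_close_hausdorff_dist]) (auto intro: compact_scaling)
  from hausdorff_close_lipschitz_image[OF this, of "\<lambda>x. d *\<^sub>R x" d]
  have "hausdorff_close ((\<lambda>x. d *\<^sub>R x) ` (\<lambda>x. (1 / d) *\<^sub>R x) ` K) ((\<lambda>x. d *\<^sub>R x) ` S) (d / r)"
    using K(3) assms(3) by (simp add: dist_norm flip: scaleR_right_diff_distrib)
  moreover have "(\<lambda>x. d *\<^sub>R x) ` (\<lambda>x. (1 / d) *\<^sub>R x) ` K = K"
    using K(3) assms(3) by (simp add: image_image)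
  ultimately show ?thesis
    using that S K(3) unfolding d_def by simp
qed

lemma hausdorff_close_normalized:
  fixes E T :: "'a::real_normed_vector set"
  assumes "bounded T" "t0 \<in> T" "hausdorff_close E T \<epsilon>" "0 < diameter E" "0 < diameter T"
    and "\<bar>diameter T - diameter E\<bar> \<le> 2 * \<epsilon>"
  shows "hausdorff_close ((\<lambda>x. (1 / diameter E) *\<^sub>R x) ` E)
    ((\<lambda>x. (1 / diameter T) *\<^sub>R x + (1 / diameter E - 1 / diameter T) *\<^sub>R t0) ` T)
    (3 * \<epsilon> / diameter E)"
proof -
  define dT dE where "dT = diameter T" and "dE = diameter E"
  have "hausdorff_close ((\<lambda>x. (1 / dE) *\<^sub>R x) ` E) ((\<lambda>x. (1 / dE) *\<^sub>R x) ` T) ((1 / dE) * \<epsilon>)"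
    using assms(4) unfolding dE_def by (intro hausdorff_close_lipschitz_image[OF assms(3)])
      (simp_all add: dist_norm flip: scaleR_right_diff_distrib)
  moreover have "hausdorff_close ((\<lambda>x. (1 / dE) *\<^sub>R x) ` T)
      ((\<lambda>x. (1 / dT) *\<^sub>R x + (1 / dE - 1 / dT) *\<^sub>R t0) ` T) (\<bar>1 / dE - 1 / dT\<bar> * dT)"
    unfolding dT_def by (rule hausdorff_close_rescale[OF assms(1,2)])
  ultimately have "hausdorff_close ((\<lambda>x. (1 / dE) *\<^sub>R x) ` E)
      ((\<lambda>x. (1 / dT) *\<^sub>R x + (1 / dE - 1 / dT) *\<^sub>R t0) ` T) ((1 / dE) * \<epsilon> + \<bar>1 / dE - 1 / dT\<bar> * dT)"
    by (rule hausdorff_close_trans)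
  moreover have "(1 / dE) * \<epsilon> + \<bar>1 / dE - 1 / dT\<bar> * dT = (\<epsilon> + \<bar>dT - dE\<bar>) / dE"
    using assms(4,5) unfolding dT_def dE_def by (simp add: field_simps abs_div)
  moreover have "(\<epsilon> + \<bar>dT - dE\<bar>) / dE \<le> 3 * \<epsilon> / dE"
    using assms(4,6) unfolding dT_def dE_def by (intro divide_right_mono) auto
  ultimately show ?thesis
    unfolding dT_def dE_def by (metis hausdorff_close_mono)
qed

lemma LA_of_hausdorff_close:
  assumes "\<Gamma> \<in> Hspace" "T \<in> \<Gamma>" "compact E" "E \<noteq> {}" "hausdorff_close E T \<epsilon>" "0 < k"
    and margin: "k * (1 + 3 * \<epsilon>) + 2 * \<epsilon> < diameter T"
  shows "E \<in> LA k \<Gamma>"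
proof -
  define dT dE where "dT = diameter T" and "dE = diameter E"
  have T: "compact T" "T \<noteq> {}"
    by (fact Hspace_compact[OF assms(1,2)])+
  then obtain t0 where "t0 \<in> T"
    by blast
  have "0 \<le> \<epsilon>"
    using hausdorff_close_nonneg[OF assms(5,4)] .
  have diam: "dT \<le> dE + 2 * \<epsilon>" "dE \<le> dT + 2 * \<epsilon>"
    unfolding dT_def dE_def using T assms(3-5) compact_imp_bounded
    by (auto intro: diameter_le_hausdorff_close hausdorff_close_sym)
  have expand: "k * (1 + 3 * \<epsilon>) = k + 3 * \<epsilon> * k" "0 \<le> 3 * \<epsilon> * k"
    using \<open>0 \<le> \<epsilon>\<close> assms(6) by (simp_all add: algebra_simps)
  then have dE: "k < dE" "3 * \<epsilon> * k < dE" and "0 < dT"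
    using margin diam assms(6) unfolding dT_def by linarith+
  define S where "S = (\<lambda>x. (1 / dT) *\<^sub>R x + (1 / dE - 1 / dT) *\<^sub>R t0) ` T"
  obtain K0 where "\<Gamma> = homothety_class K0"
    using assms(1) unfolding Hspace_def by blast
  then have "S \<in> \<Gamma>"
    unfolding S_def using assms(2) \<open>0 < dT\<close> by (simp add: homothety_class_image)
  moreover have "diameter S = 1"
    unfolding S_def using diameter_homothety_image[OF compact_imp_bounded[OF T(1)]] \<open>0 < dT\<close>
    by (simp add: dT_def)
  moreover have "hausdorff_dist ((\<lambda>x. (1 / dE) *\<^sub>R x) ` E) S \<le> 3 * \<epsilon> / dE"
    using hausdorff_close_normalized[OF compact_imp_bounded[OF T(1)] \<open>t0 \<in> T\<close> assms(5)]
      diam dE(1) \<open>0 < dT\<close> assms(4,6) T(2)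
    unfolding S_def dT_def dE_def by (intro hausdorff_dist_le) (auto simp: abs_le_iff)
  moreover have "3 * \<epsilon> / dE < 1 / k"
    using dE assms(6) by (simp add: field_simps)
  ultimately show ?thesis
    unfolding LA_def using assms(3,4) dE(1) by (fastforce simp: dE_def)
qed

lemma compact_unit_square: "compact unit_square"
  by (simp add: unit_square_def compact_Times)

lemma unit_square_nonempty: "unit_square \<noteq> {}"
  by (simp add: unit_square_def)

lemma continuous_on_funpow:
  fixes f :: "'a::topological_space \<Rightarrow> 'a"
  assumes "continuous_on UNIV f"
  shows "continuous_on UNIV (f ^^ n)"
proof (induction n)
  case (Suc n)
  have "continuous_on UNIV (\<lambda>x. f ((f ^^ n) x))"
    by (rule continuous_on_compose2[OF assms Suc.IH]) simp
  then show ?case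
    by (simp add: o_def)
qed (simp add: id_def)

lemma commutes_Z2_funpow:
  assumes "commutes_Z2 F"
  shows "commutes_Z2 (F ^^ n)"
proof (induction n)
  case (Suc n)
  show ?case
    unfolding commutes_Z2_def
  proof (intro allI impI)
    fix x m
    assume "m \<in> Z2"
    then have "(F ^^ n) (x + m) = (F ^^ n) x + m" "F ((F ^^ n) x + m) = F ((F ^^ n) x) + m"
      using Suc assms unfolding commutes_Z2_def by blast+
    then show "(F ^^ Suc n) (x + m) = (F ^^ Suc n) x + m"
      by simp
  qed
qed (simp add: commutes_Z2_def)

text \<open>\<open>C\<^sub>q\<^sup>-\<^sup>1\<close> maps the unit square onto \<open>[0, q] \<times> [0, 1]\<close>, which is covered by
  the translates of the unit square by \<open>(j, 0)\<close>, \<open>0 \<le> j \<le> q\<close>.\<close>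

lemma hausdorff_close_stretched_square:
  assumes "0 < q" "commutes_Z2 G"
  shows "hausdorff_close (G ` Cq_inv q ` unit_square) (G ` unit_square) (real q)"
  unfolding hausdorff_close_def
proof (intro conjI ballI)
  fix y
  assume "y \<in> G ` Cq_inv q ` unit_square"
  then obtain a b where ab: "0 \<le> a" "a \<le> 1" "0 \<le> b" "b \<le> 1" and y: "y = G (real q * a, b)"
    by (auto simp: unit_square_def Cq_inv_def)
  define j where "j = \<lfloor>real q * a\<rfloor>"
  have j: "0 \<le> j" "of_int j \<le> real q * a" "real q * a - of_int j < 1"
    using ab unfolding j_def by (simp_all add: of_int_floor_le) linarith
  then have "(real q * a - of_int j, b) \<in> unit_square"
    using ab by (simp add: unit_square_def)
  moreover have "(of_int j, 0) \<in> Z2"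
    by (simp add: Z2_iff)
  from assms(2)[unfolded commutes_Z2_def, rule_format, OF this, of "(real q * a - of_int j, b)"]
  have "y = G (real q * a - of_int j, b) + (of_int j, 0)"
    by (simp add: y)
  moreover have "of_int j \<le> real q"
    using j(2) ab(2) mult_left_le[OF ab(2), of "real q"] by linarith
  ultimately show "\<exists>x\<in>G ` unit_square. dist y x \<le> real q"
    using j(1) by (intro bexI[of _ "G (real q * a - of_int j, b)"]) (auto simp: dist_norm)
next
  fix x
  assume "x \<in> G ` unit_square"
  then obtain w where "w \<in> unit_square" "x = G w"
    by blast
  moreover have "Cq q w \<in> unit_square"
    using \<open>w \<in> unit_square\<close> assms(1) by (cases w) (auto simp: unit_square_def Cq_def divide_le_eq_1)
  ultimately have "x \<in> G ` Cq_inv q ` unit_square"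
    using Cq_inv_Cq[OF assms(1)] by (metis image_eqI)
  then show "\<exists>y\<in>G ` Cq_inv q ` unit_square. dist y x \<le> real q"
    by (intro bexI[of _ x]) auto
qed

lemma Cq_conj_image_hausdorff_close:
  assumes "0 < q" "commutes_Z2 G"
    and "hausdorff_close (G ` unit_square) ((\<lambda>x. d *\<^sub>R x) ` Cq_inv q ` S) \<delta>"
  shows "hausdorff_close (Cq_conj q G ` unit_square) ((\<lambda>x. d *\<^sub>R x) ` S) (real q + \<delta>)"
proof -
  have "hausdorff_close (G ` Cq_inv q ` unit_square) ((\<lambda>x. d *\<^sub>R x) ` Cq_inv q ` S) (real q + \<delta>)"
    by (rule hausdorff_close_trans[OF hausdorff_close_stretched_square[OF assms(1,2)] assms(3)])
  from hausdorff_close_lipschitz_image[OF this, of "Cq q" 1]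
  show ?thesis
    using dist_Cq_le[OF assms(1)] linear_Cq[of q] assms(1)
    by (simp add: Cq_conj_def image_comp o_def linear_scale)
qed

lemma Cq_conj_image_LA:
  fixes k :: real
  assumes q: "0 < q" and k: "0 < k" and \<Gamma>: "\<Gamma> \<in> Hspace"
    and G: "commutes_Z2 G" "continuous_on UNIV G"
    and LA: "G ` unit_square \<in> LA (20 * (real q)\<^sup>2 * (k + 1)) (Cq_inv_class q \<Gamma>)"
  shows "Cq_conj q G ` unit_square \<in> LA k \<Gamma>"
proof -
  define l where "l = 20 * (real q)\<^sup>2 * (k + 1)"
  define d where "d = diameter (G ` unit_square)"
  have "0 < l"
    using q k by (simp add: l_def)
  obtain S' where S': "S' \<in> Cq_inv_class q \<Gamma>" "diameter S' = 1" "l < d"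
    and close: "hausdorff_close (G ` unit_square) ((\<lambda>x. d *\<^sub>R x) ` S') (d / l)"
    using LA_hausdorff_close[OF Cq_inv_class_Hspace[OF q \<Gamma>] LA[folded l_def] \<open>0 < l\<close>]
    unfolding d_def by blast
  obtain S where S: "S \<in> \<Gamma>" "S' = Cq_inv q ` S"
    using S'(1) unfolding Cq_inv_class_def by blast
  have "bounded S"
    using compact_imp_bounded[OF Hspace_compact(1)[OF \<Gamma> S(1)]] .
  define T where "T = (\<lambda>x. d *\<^sub>R x + 0) ` S"
  obtain K0 where "\<Gamma> = homothety_class K0"
    using \<Gamma> unfolding Hspace_def by blast
  then have "T \<in> \<Gamma>"
    unfolding T_def using homothety_class_image[of S K0 d 0] S(1) S'(3) \<open>0 < l\<close> by simp
  have "hausdorff_close (Cq_conj q G ` unit_square) T (real q + d / l)"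
    using Cq_conj_image_hausdorff_close[OF q G(1) close[unfolded S(2)]] by (simp add: T_def)
  moreover have "compact (Cq_conj q G ` unit_square)"
    using G(2) unfolding Cq_conj_def
    by (intro compact_continuous_image[OF _ compact_unit_square] continuous_on_compose
        linear_continuous_on bounded_linear_Cq bounded_linear_Cq_inv
        continuous_on_subset[OF G(2)]) auto
  moreover have "k * (1 + 3 * (real q + d / l)) + 2 * (real q + d / l) < diameter T"
  proof -
    have "1 \<le> diameter S * real q"
      using diameter_lipschitz_image[OF \<open>bounded S\<close> dist_Cq_inv_le[OF q]] S'(2) S(2)
      by (simp add: mult.commute)
    moreover have "diameter T = d * diameter S"
      unfolding T_def using diameter_homothety_image[OF \<open>bounded S\<close>, of d 0] S'(3) \<open>0 < l\<close> by simp
    ultimately show ?thesis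
      using diameter_margin_arith[where q = "real q" and g = "diameter S" and \<epsilon> = "real q + d / l"]
        q k S'(3)
      by (simp add: l_def)
  qed
  ultimately show ?thesis
    using LA_of_hausdorff_close[OF \<Gamma> \<open>T \<in> \<Gamma>\<close>] k unit_square_nonempty by simp
qed

theorem mainTheorem10:
  fixes \<Gamma> :: "pt set set" and q k :: nat
  assumes "\<Gamma> \<in> Hspace" and "q \<ge> 1" and "k \<ge> 1"
  shows "\<exists>l::nat. l \<ge> 1 \<and> (\<forall>F \<in> P l (Cq_inv_class q \<Gamma>). Cq_conj q F \<in> P k \<Gamma>)"
proof (intro exI conjI ballI)
  define l where "l = 20 * q\<^sup>2 * (k + 1)"
  show "1 \<le> l"
    using one_le_power[OF assms(2), of 2] by (simp add: l_def)
  fix F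
  assume "F \<in> P l (Cq_inv_class q \<Gamma>)"
  then obtain n where F: "F \<in> Obar_lifts" and n: "1 \<le> n"
    and LA: "(F ^^ n) ` unit_square \<in> LA (real l) (Cq_inv_class q \<Gamma>)"
    unfolding P_def by blast
  have "commutes_Z2 (F ^^ n)" "continuous_on UNIV (F ^^ n)"
    using F unfolding Obar_lifts_def
    by (auto intro: commutes_Z2_funpow continuous_on_funpow smooth_imp_continuous
        torus_diffeo_liftD)
  moreover have "real l = 20 * (real q)\<^sup>2 * (real k + 1)"
    by (simp add: l_def algebra_simps)
  ultimately have "Cq_conj q (F ^^ n) ` unit_square \<in> LA (real k) \<Gamma>"
    using Cq_conj_image_LA[OF _ _ assms(1)] LA assms(2,3) by simp
  then show "Cq_conj q F \<in> P k \<Gamma>"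
    unfolding P_def using Obar_lifts_Cq_conj[OF _ F] Cq_conj_funpow assms(2) n by auto
qed

end
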